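(* Let $k$ be a field of characteristic $p>2$ ($p$ prime). For any $u,v,w\in k_1\langle X\rangle$, $$\kappa(u,v+w)\equiv\kappa(u,v)+\kappa(u,w)+\sum_{i=0}^{p-2}(i+1)^{-1}\binom{p-1}{i}[u,v^{i+1}w^{p-(i+1)}u^{p-1}]\pmod{T^{(3)}}.$$
   Context: $X=\{x_i\mid i\ge0\}$ is countably infinite; $k_1\langle X\rangle$ is the free unitary associative $k$-algebra on $X$. $[a,b]=ab-ba$, $[a,b,c]=[[a,b],c]$. $T^{(3)}$ is the $T$-ideal of $k_1\langle X\rangle$ (ideal invariant under all endomorphisms) generated by $[x_1,x_2,x_3]$. For $u,v\in k_1\langle X\rangle$, $\kappa(u,v)=[u,v]u^{p-1}v^{p-1}$. Congruence modulo a subspace $U$ means the difference lies in $U$. *)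

theory Defs
  imports "HOL-Library.Poly_Mapping" "HOL-Computational_Algebra.Primes"
begin

text \<open>Words (monomials) over the alphabet X = {x_i | i >= 0}; the (noncommutative)
  monoid operation is concatenation, written as +.\<close>
datatype word = Word "nat list"

instantiation word :: monoid_add
begin
definition zero_word :: word where "zero_word = Word []"
fun plus_word :: "word \<Rightarrow> word \<Rightarrow> word" where
  "plus_word (Word a) (Word b) = Word (a @ b)"
instance
proof
  fix a b c :: word
  show "a + b + c = a + (b + c)" by (cases a; cases b; cases c) simp
  show "0 + a = a" by (cases a) (simp add: zero_word_def)
  show "a + 0 = a" by (cases a) (simp add: zero_word_def)
qed
end

text \<open>The free unitary associative k-algebra k_1<X>: finitely supported k-linear
  combinations of words, with convolution product (a ring_1 via Poly_Mapping).\<close>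
type_synonym 'k freealg = "word \<Rightarrow>\<^sub>0 'k"

definition gen :: "nat \<Rightarrow> 'k::field freealg" where
  "gen i = Poly_Mapping.single (Word [i]) 1"

definition sc :: "'k::field \<Rightarrow> 'k freealg" where
  "sc c = Poly_Mapping.single 0 c"

definition comm :: "'a::ring \<Rightarrow> 'a \<Rightarrow> 'a" where
  "comm a b = a * b - b * a"

definition kappa :: "nat \<Rightarrow> 'a::ring_1 \<Rightarrow> 'a \<Rightarrow> 'a" where
  "kappa p u v = comm u v * u ^ (p - 1) * v ^ (p - 1)"

definition alg_endo :: "('k::field freealg \<Rightarrow> 'k freealg) \<Rightarrow> bool" where
  "alg_endo \<phi> \<longleftrightarrow> (\<forall>a b. \<phi> (a + b) = \<phi> a + \<phi> b)
     \<and> (\<forall>c a. \<phi> (sc c * a) = sc c * \<phi> a)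
     \<and> (\<forall>a b. \<phi> (a * b) = \<phi> a * \<phi> b)
     \<and> \<phi> 1 = 1"

text \<open>Two-sided ideals (automatically k-subspaces, since sc c * a lies in them).\<close>
definition two_sided_ideal :: "'k::field freealg set \<Rightarrow> bool" where
  "two_sided_ideal I \<longleftrightarrow> 0 \<in> I \<and> (\<forall>a\<in>I. \<forall>b\<in>I. a + b \<in> I)
     \<and> (\<forall>a\<in>I. \<forall>r. r * a \<in> I \<and> a * r \<in> I)"

definition T_ideal :: "'k::field freealg set \<Rightarrow> bool" where
  "T_ideal I \<longleftrightarrow> two_sided_ideal I \<and> (\<forall>\<phi>. alg_endo \<phi> \<longrightarrow> \<phi> ` I \<subseteq> I)"

definition T3 :: "'k::field freealg set" where
  "T3 = \<Inter> {I. T_ideal I \<and> comm (comm (gen 1) (gen 2)) (gen 3) \<in> I}"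

end

theory Submission
  imports Defs
begin

text \<open>Modulo T^(3) every commutator is central and [x, y] [x, z] vanishes. Hence, behind a factor
  [u, v] or [u, w], the elements u, v, w may be treated as commuting: with n = p - 1, the element
  [u, v + w] u^n (v + w)^n expands binomially into terms [u, v] v^i w^(n-i) u^n and
  [u, w] v^i w^(n-i) u^n, while [u, v^(i+1) w^(n-i) u^n] is i + 1 times a term of the first kind
  plus n - i times one of the second. As i + 1 < p is invertible in k and
  (n - i) binom(n, i) = (i + 1) binom(n, i + 1), the coefficients (i + 1)^(-1) binom(n, i) turn
  these into exactly the binomial coefficients of the expansion.\<close>

fun eval_word :: "(nat \<Rightarrow> 'a::monoid_mult) \<Rightarrow> word \<Rightarrow> 'a" where
  "eval_word s (Word l) = prod_list (map s l)"

lemma eval_word_zero: "eval_word s 0 = 1"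
  by (simp add: zero_word_def)

lemma eval_word_plus: "eval_word s (x + y) = eval_word s x * eval_word s y"
  by (cases x; cases y) simp

lemma poly_mapping_sum_single:
  "f = (\<Sum>x\<in>Poly_Mapping.keys f. Poly_Mapping.single x (Poly_Mapping.lookup f x))"
proof (rule poly_mapping_eqI)
  fix k
  have "(\<Sum>x\<in>Poly_Mapping.keys f. Poly_Mapping.lookup (Poly_Mapping.single x (Poly_Mapping.lookup f x)) k)
      = (\<Sum>x\<in>Poly_Mapping.keys f. if x = k then Poly_Mapping.lookup f x else 0)"
    by (rule sum.cong) (auto simp: lookup_single)
  then show "Poly_Mapping.lookup f k
      = Poly_Mapping.lookup (\<Sum>x\<in>Poly_Mapping.keys f. Poly_Mapping.single x (Poly_Mapping.lookup f x)) k"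
    by (simp add: lookup_sum in_keys_iff)
qed

lemma sc_add: "sc (a + b) = sc a + sc b"
  by (simp add: sc_def single_add)

lemma sc_mult: "sc (a * b) = sc a * sc b"
  by (simp add: sc_def mult_single)

lemma sc_one [simp]: "sc 1 = 1"
  by (simp add: sc_def)

lemma sc_of_nat: "sc (of_nat n) = of_nat n"
  by (simp add: sc_def)

lemma sc_commute: "sc c * f = f * sc c"
proof -
  have "sc c * Poly_Mapping.single x a = Poly_Mapping.single x a * sc c" for x a
    by (simp add: sc_def mult_single mult.commute)
  then show ?thesis
    by (subst (1 3) poly_mapping_sum_single) (simp add: sum_distrib_left sum_distrib_right)
qed

definition subst_alg :: "(nat \<Rightarrow> 'k::field freealg) \<Rightarrow> 'k freealg \<Rightarrow> 'k freealg" where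
  "subst_alg s f = (\<Sum>x\<in>Poly_Mapping.keys f. sc (Poly_Mapping.lookup f x) * eval_word s x)"

lemma subst_alg_superset:
  assumes "finite S" "Poly_Mapping.keys f \<subseteq> S"
  shows "subst_alg s f = (\<Sum>x\<in>S. sc (Poly_Mapping.lookup f x) * eval_word s x)"
  unfolding subst_alg_def using assms
  by (intro sum.mono_neutral_left) (auto simp: in_keys_iff sc_def)

lemma subst_alg_add: "subst_alg s (f + g) = subst_alg s f + subst_alg s g"
proof -
  let ?S = "Poly_Mapping.keys f \<union> Poly_Mapping.keys g"
  have "subst_alg s (f + g) = (\<Sum>x\<in>?S. sc (Poly_Mapping.lookup (f + g) x) * eval_word s x)"
    by (rule subst_alg_superset) (auto simp: keys_add)
  also have "\<dots> = (\<Sum>x\<in>?S. sc (Poly_Mapping.lookup f x) * eval_word s x)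
                + (\<Sum>x\<in>?S. sc (Poly_Mapping.lookup g x) * eval_word s x)"
    by (simp add: lookup_add sc_add distrib_right sum.distrib)
  also have "\<dots> = subst_alg s f + subst_alg s g"
    using subst_alg_superset[of ?S f s] subst_alg_superset[of ?S g s] by simp
  finally show ?thesis .
qed

lemma subst_alg_zero [simp]: "subst_alg s 0 = 0"
  by (simp add: subst_alg_def)

lemma subst_alg_sum: "subst_alg s (sum F A) = (\<Sum>a\<in>A. subst_alg s (F a))"
  by (induction A rule: infinite_finite_induct) (auto simp: subst_alg_add)

lemma subst_alg_single: "subst_alg s (Poly_Mapping.single x c) = sc c * eval_word s x"
  by (cases "c = 0") (simp_all add: subst_alg_def sc_def)

lemma subst_alg_mult: "subst_alg s (f * g) = subst_alg s f * subst_alg s g"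
proof -
  let ?F = "Poly_Mapping.keys f" and ?G = "Poly_Mapping.keys g"
  let ?f = "Poly_Mapping.lookup f" and ?g = "Poly_Mapping.lookup g"
  have "f * g = (\<Sum>x\<in>?F. \<Sum>y\<in>?G. Poly_Mapping.single x (?f x) * Poly_Mapping.single y (?g y))"
    by (subst poly_mapping_sum_single[of f], subst poly_mapping_sum_single[of g])
      (simp add: sum_distrib_left sum_distrib_right sum.swap[of _ ?G])
  then have "subst_alg s (f * g) = (\<Sum>x\<in>?F. \<Sum>y\<in>?G. sc (?f x) * sc (?g y) * (eval_word s x * eval_word s y))"
    by (simp add: subst_alg_sum mult_single subst_alg_single eval_word_plus sc_mult)
  also have "\<dots> = (\<Sum>x\<in>?F. \<Sum>y\<in>?G. (sc (?f x) * eval_word s x) * (sc (?g y) * eval_word s y))"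
  proof -
    have "sc a * sc b * (X * Y) = sc a * X * (sc b * Y)" for a b and X Y :: "'a freealg"
    proof -
      have "sc a * sc b * (X * Y) = sc a * ((sc b * X) * Y)"
        by (simp add: mult.assoc)
      then show ?thesis
        by (simp add: sc_commute[of b X] mult.assoc)
    qed
    then show ?thesis by simp
  qed
  also have "\<dots> = subst_alg s f * subst_alg s g"
    by (simp add: subst_alg_def sum_distrib_left sum_distrib_right sum.swap[of _ ?G])
  finally show ?thesis .
qed

lemma subst_alg_sc: "subst_alg s (sc c) = sc c"
  by (simp add: sc_def subst_alg_single eval_word_zero)

lemma alg_endo_subst_alg: "alg_endo (subst_alg s)"
  unfolding alg_endo_def
  by (simp add: subst_alg_add subst_alg_mult subst_alg_sc flip: sc_one)

lemma subst_alg_gen: "subst_alg s (gen i) = s i"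
  by (simp add: gen_def subst_alg_single)

lemma subst_alg_diff: "subst_alg s (a - b) = subst_alg s a - subst_alg s b"
  by (metis add_diff_cancel diff_add_cancel subst_alg_add)

lemma subst_alg_comm: "subst_alg s (comm a b) = comm (subst_alg s a) (subst_alg s b)"
  by (simp add: comm_def subst_alg_diff subst_alg_mult)

lemma T_ideal_Inter: "(\<And>I. I \<in> \<I> \<Longrightarrow> T_ideal I) \<Longrightarrow> T_ideal (\<Inter>\<I>)"
  unfolding T_ideal_def two_sided_ideal_def by blast

lemma T_ideal_T3: "T_ideal T3"
  unfolding T3_def by (rule T_ideal_Inter) blast

lemma comm_comm_mem_T_ideal:
  assumes "T_ideal I" and "comm (comm (gen 1) (gen 2)) (gen 3) \<in> I"
  shows "comm (comm x y) z \<in> I"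
proof -
  let ?s = "(\<lambda>_. z)(1 := x, 2 := y)"
  have "subst_alg ?s (comm (comm (gen 1) (gen 2)) (gen 3)) \<in> I"
    using assms alg_endo_subst_alg unfolding T_ideal_def by blast
  then show ?thesis
    by (simp add: subst_alg_comm subst_alg_gen)
qed

lemma comm_add_right: "comm x (y + z) = comm x y + comm x z"
  by (simp add: comm_def algebra_simps)

lemma comm_mult_right: "comm x (y * z) = comm x y * z + y * comm x z"
  by (simp add: comm_def algebra_simps)

lemma comm_one_right [simp]: "comm (x :: 'a::ring_1) 1 = 0"
  by (simp add: comm_def)

lemma comm_self [simp]: "comm x x = 0"
  by (simp add: comm_def)

lemma comm_power_self [simp]: "comm (x :: 'a::ring_1) (x ^ n) = 0"
  by (simp add: comm_def power_commutes)

lemma sum_binomial_pascal: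
  fixes g :: "nat \<Rightarrow> 'a::ring_1"
  shows "(\<Sum>i\<le>n. of_nat (n choose i) * g (Suc i)) + (\<Sum>i\<le>n. of_nat (n choose i) * g i)
       = (\<Sum>i\<le>Suc n. of_nat (Suc n choose i) * g i)"
proof -
  have "(\<Sum>i\<le>n. of_nat (n choose i) * g i) = (\<Sum>i\<le>Suc n. of_nat (n choose i) * g i)"
    by (simp add: binomial_eq_0)
  also have "\<dots> = g 0 + (\<Sum>i\<le>n. of_nat (n choose Suc i) * g (Suc i))"
    by (subst sum.atMost_Suc_shift) simp
  finally show ?thesis
    by (subst sum.atMost_Suc_shift) (simp add: distrib_right sum.distrib algebra_simps)
qed

locale comm3_ideal =
  fixes I :: "'a::ring_1 set"
  assumes zero_mem: "0 \<in> I"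
    and add_mem: "a \<in> I \<Longrightarrow> b \<in> I \<Longrightarrow> a + b \<in> I"
    and mult_left_mem: "a \<in> I \<Longrightarrow> r * a \<in> I"
    and mult_right_mem: "a \<in> I \<Longrightarrow> a * r \<in> I"
    and comm_comm_mem: "comm (comm a b) c \<in> I"
begin

lemma uminus_mem: "a \<in> I \<Longrightarrow> - a \<in> I"
  using mult_left_mem[of a "- 1"] by simp

lemma uminus_mem_iff: "- a \<in> I \<longleftrightarrow> a \<in> I"
  using uminus_mem[of "- a"] uminus_mem[of a] by auto

definition equiv_mod :: "'a \<Rightarrow> 'a \<Rightarrow> bool" (infix "\<sim>" 50) where
  "a \<sim> b \<longleftrightarrow> a - b \<in> I"

lemma equiv_refl [simp]: "a \<sim> a"
  by (simp add: equiv_mod_def zero_mem)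

lemma equiv_sym: "a \<sim> b \<Longrightarrow> b \<sim> a"
  unfolding equiv_mod_def using uminus_mem[of "a - b"] by simp

lemma equiv_trans [trans]: "a \<sim> b \<Longrightarrow> b \<sim> c \<Longrightarrow> a \<sim> c"
  unfolding equiv_mod_def using add_mem[of "a - b" "b - c"] by simp

lemma equiv_mem: "a \<sim> b \<Longrightarrow> b \<in> I \<Longrightarrow> a \<in> I"
  unfolding equiv_mod_def using add_mem[of "a - b" b] by simp

lemma equiv_add: "a \<sim> b \<Longrightarrow> c \<sim> d \<Longrightarrow> a + c \<sim> b + d"
proof -
  have "a + c - (b + d) = (a - b) + (c - d)"
    by (simp add: algebra_simps)
  then show "a \<sim> b \<Longrightarrow> c \<sim> d \<Longrightarrow> a + c \<sim> b + d"
    unfolding equiv_mod_def using add_mem by metis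
qed

lemma equiv_mult_left: "a \<sim> b \<Longrightarrow> r * a \<sim> r * b"
  unfolding equiv_mod_def using mult_left_mem by (metis right_diff_distrib)

lemma equiv_mult_right: "a \<sim> b \<Longrightarrow> a * r \<sim> b * r"
  unfolding equiv_mod_def using mult_right_mem by (metis left_diff_distrib)

lemma equiv_sum: "(\<And>i. i \<in> A \<Longrightarrow> f i \<sim> g i) \<Longrightarrow> sum f A \<sim> sum g A"
  by (induction A rule: infinite_finite_induct) (auto intro: equiv_add)

definition central :: "'a \<Rightarrow> bool" where
  "central c \<longleftrightarrow> (\<forall>z. c * z \<sim> z * c)"

lemma centralD: "central c \<Longrightarrow> c * z \<sim> z * c"
  by (simp add: central_def)

lemma central_comm: "central (comm a b)"
  unfolding central_def equiv_mod_def using comm_comm_mem by (simp add: comm_def)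

text \<open>[x, y x] = [x, y] x, so [[x, y x], z] \<in> I; moving the central [x, y] past z leaves
  [x, y] [x, z].\<close>
lemma comm_mult_comm_mem: "comm x y * comm x z \<in> I"
proof -
  let ?c = "comm x y"
  have "?c * x * z - z * ?c * x \<in> I"
    using comm_comm_mem[of x "y * x" z] by (simp add: comm_def algebra_simps)
  moreover have "z * ?c * x - ?c * z * x \<in> I"
    using equiv_mult_right[OF equiv_sym[OF centralD[OF central_comm[of x y]]], of z x]
    by (simp add: equiv_mod_def left_diff_distrib)
  ultimately have "(?c * x * z - z * ?c * x) + (z * ?c * x - ?c * z * x) \<in> I"
    by (rule add_mem)
  then show ?thesis
    by (simp add: comm_def algebra_simps)
qed

text \<open>c * comm x y \<in> I says that x and y commute modulo I behind the factor c.\<close>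

lemma annih_comm_swap: "c * comm y x \<in> I \<longleftrightarrow> c * comm x y \<in> I"
proof -
  have "c * comm y x = - (c * comm x y)"
    by (simp add: comm_def algebra_simps)
  then show ?thesis
    by (simp add: uminus_mem_iff)
qed

lemma annih_comm_mult_right:
  assumes "central c" "c * comm x y \<in> I" "c * comm x z \<in> I"
  shows "c * comm x (y * z) \<in> I"
proof -
  have "c * y * comm x z \<sim> y * (c * comm x z)"
    using equiv_mult_right[OF centralD[OF assms(1)], of y "comm x z"] by (simp add: mult.assoc)
  then have "c * y * comm x z \<in> I"
    using mult_left_mem[OF assms(3)] by (rule equiv_mem)
  then show ?thesis
    using add_mem mult_right_mem[OF assms(2)] by (simp add: comm_mult_right distrib_left mult.assoc)
qed

lemma annih_comm_power_right:
  assumes "central c" "c * comm x y \<in> I"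
  shows "c * comm x (y ^ n) \<in> I"
  by (induction n) (simp_all add: zero_mem annih_comm_mult_right[OF assms(1,2)])

lemma annih_comm_powers:
  assumes "central c" "c * comm x y \<in> I"
  shows "c * comm (x ^ m) (y ^ n) \<in> I"
proof -
  have "c * comm (y ^ n) x \<in> I"
    using annih_comm_power_right[OF assms] annih_comm_swap by blast
  then have "c * comm (y ^ n) (x ^ m) \<in> I"
    by (rule annih_comm_power_right[OF assms(1)])
  then show ?thesis
    using annih_comm_swap by blast
qed

lemma annih_commute: "c * comm x y \<in> I \<Longrightarrow> c * x * y \<sim> c * y * x"
  by (simp add: equiv_mod_def comm_def algebra_simps)

lemma comm_power_right_equiv: "comm u (x ^ Suc m) \<sim> of_nat (Suc m) * (comm u x * x ^ m)"
proof (induction m)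
  case 0
  show ?case by simp
next
  case (Suc m)
  have "comm u (x ^ Suc (Suc m)) = comm u (x ^ Suc m) * x + x ^ Suc m * comm u x"
    by (simp add: comm_mult_right power_Suc2 del: power_Suc)
  also have "\<dots> \<sim> of_nat (Suc m) * (comm u x * x ^ m) * x + comm u x * x ^ Suc m"
    using equiv_add[OF equiv_mult_right[OF Suc.IH] equiv_sym[OF centralD[OF central_comm]]] .
  also have "\<dots> = of_nat (Suc (Suc m)) * (comm u x * x ^ Suc m)"
    by (simp add: algebra_simps power_Suc2 del: power_Suc)
  finally show ?case .
qed

lemma central_binomial:
  assumes "central c" "c * comm v w \<in> I"
  shows "c * (v + w) ^ n \<sim> (\<Sum>i\<le>n. of_nat (n choose i) * (c * v ^ i * w ^ (n - i)))"
proof (induction n)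
  case 0
  show ?case by simp
next
  case (Suc n)
  define g where "g i = c * v ^ i * w ^ (Suc n - i)" for i
  have shift: "c * v ^ i * w ^ j * v \<sim> c * v ^ Suc i * w ^ j" for i j
  proof -
    have "c * comm v (v ^ i * w ^ j) \<in> I"
      using assms zero_mem by (intro annih_comm_mult_right annih_comm_power_right) simp_all
    then have "c * (v ^ i * w ^ j) * v \<sim> c * v * (v ^ i * w ^ j)"
      by (intro annih_commute) (simp add: annih_comm_swap)
    then show ?thesis
      by (simp add: mult.assoc)
  qed
  have "c * (v + w) ^ Suc n = c * (v + w) ^ n * (v + w)"
    by (simp add: power_Suc2 mult.assoc del: power_Suc)
  also have "\<dots> \<sim> (\<Sum>i\<le>n. of_nat (n choose i) * (c * v ^ i * w ^ (n - i))) * (v + w)"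
    using Suc.IH by (rule equiv_mult_right)
  also have "\<dots> = (\<Sum>i\<le>n. of_nat (n choose i) * (c * v ^ i * w ^ (n - i) * v))
                  + (\<Sum>i\<le>n. of_nat (n choose i) * (c * v ^ i * w ^ (n - i) * w))"
    by (simp add: sum_distrib_right distrib_left sum.distrib mult.assoc)
  also have "\<dots> \<sim> (\<Sum>i\<le>n. of_nat (n choose i) * g (Suc i)) + (\<Sum>i\<le>n. of_nat (n choose i) * g i)"
  proof (intro equiv_add equiv_sum equiv_mult_left)
    fix i
    show "c * v ^ i * w ^ (n - i) * v \<sim> g (Suc i)"
      using shift by (simp add: g_def)
    assume "i \<in> {..n}"
    then have "Suc n - i = Suc (n - i)" by auto
    then show "c * v ^ i * w ^ (n - i) * w \<sim> g i"
      by (simp add: g_def power_Suc2 mult.assoc del: power_Suc)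
  qed
  also have "\<dots> = (\<Sum>i\<le>Suc n. of_nat (Suc n choose i) * (c * v ^ i * w ^ (Suc n - i)))"
    using sum_binomial_pascal[of n g] by (simp only: g_def)
  finally show ?case .
qed

lemma central_binomial_power:
  assumes "central c" "c * comm u v \<in> I" "c * comm u w \<in> I" "c * comm v w \<in> I"
  shows "c * u ^ n * (v + w) ^ n \<sim> (\<Sum>i\<le>n. of_nat (n choose i) * (c * v ^ i * w ^ (n - i) * u ^ n))"
proof -
  have "c * comm u (v + w) \<in> I"
    using add_mem[OF assms(2,3)] by (simp add: comm_add_right distrib_left)
  then have "c * u ^ n * (v + w) ^ n \<sim> c * (v + w) ^ n * u ^ n"
    by (intro annih_commute annih_comm_powers assms(1))
  also have "\<dots> \<sim> (\<Sum>i\<le>n. of_nat (n choose i) * (c * v ^ i * w ^ (n - i))) * u ^ n"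
    using central_binomial[OF assms(1,4)] by (rule equiv_mult_right)
  also have "\<dots> = (\<Sum>i\<le>n. of_nat (n choose i) * (c * v ^ i * w ^ (n - i) * u ^ n))"
    by (simp add: sum_distrib_right mult.assoc)
  finally show ?thesis .
qed

lemma comm_mult_comm_mem_of_mem:
  assumes "x \<in> {v, w}"
  shows "comm u x * comm u v \<in> I" "comm u x * comm u w \<in> I" "comm u x * comm v w \<in> I"
proof -
  show "comm u x * comm u v \<in> I" "comm u x * comm u w \<in> I"
    by (rule comm_mult_comm_mem)+
  have "comm u v * comm v w = - (comm v u * comm v w)" "comm u w * comm v w = comm w u * comm w v"
    by (simp_all add: comm_def algebra_simps)
  then show "comm u x * comm v w \<in> I"
    using assms comm_mult_comm_mem uminus_mem by auto
qed

lemma kappa_add_right_binomial: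
  "kappa (Suc n) u (v + w)
     \<sim> (\<Sum>i\<le>n. of_nat (n choose i) * (comm u v * v ^ i * w ^ (n - i) * u ^ n))
       + (\<Sum>i\<le>n. of_nat (n choose i) * (comm u w * v ^ i * w ^ (n - i) * u ^ n))"
proof -
  have "kappa (Suc n) u (v + w) = comm u v * u ^ n * (v + w) ^ n + comm u w * u ^ n * (v + w) ^ n"
    by (simp add: kappa_def comm_add_right distrib_right)
  also have "\<dots> \<sim> (\<Sum>i\<le>n. of_nat (n choose i) * (comm u v * v ^ i * w ^ (n - i) * u ^ n))
       + (\<Sum>i\<le>n. of_nat (n choose i) * (comm u w * v ^ i * w ^ (n - i) * u ^ n))"
    by (intro equiv_add central_binomial_power central_comm comm_mult_comm_mem_of_mem[of _ v w]) simp_all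
  finally show ?thesis .
qed

lemma comm_monomial_equiv:
  "comm u (v ^ Suc i * w ^ Suc j * u ^ n)
     \<sim> of_nat (Suc i) * (comm u v * v ^ i * w ^ Suc j * u ^ n)
       + of_nat (Suc j) * (comm u w * v ^ Suc i * w ^ j * u ^ n)"
proof -
  have "comm u (v ^ Suc i * w ^ Suc j * u ^ n)
      = comm u (v ^ Suc i) * w ^ Suc j * u ^ n + v ^ Suc i * comm u (w ^ Suc j) * u ^ n"
    by (simp add: comm_mult_right distrib_right del: power_Suc)
  also have "\<dots> \<sim> of_nat (Suc i) * (comm u v * v ^ i) * w ^ Suc j * u ^ n
                 + v ^ Suc i * (of_nat (Suc j) * (comm u w * w ^ j)) * u ^ n"
    by (intro equiv_add equiv_mult_right equiv_mult_left comm_power_right_equiv)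
  also have "\<dots> = of_nat (Suc i) * (comm u v * v ^ i * w ^ Suc j * u ^ n)
                 + of_nat (Suc j) * (v ^ Suc i * comm u w * w ^ j * u ^ n)"
    by (simp add: mult.assoc mult_of_nat_commute del: of_nat_Suc power_Suc)
  also have "\<dots> \<sim> of_nat (Suc i) * (comm u v * v ^ i * w ^ Suc j * u ^ n)
                 + of_nat (Suc j) * (comm u w * v ^ Suc i * w ^ j * u ^ n)"
    by (intro equiv_add equiv_refl equiv_mult_left equiv_mult_right equiv_sym[OF centralD[OF central_comm]])
  finally show ?thesis .
qed

lemma kappa_add_right_equiv:
  fixes a :: "nat \<Rightarrow> 'a"
  assumes a_Suc: "\<And>i. i < n \<Longrightarrow> a i * of_nat (Suc i) = of_nat (n choose i)"
    and a_diff: "\<And>i. i < n \<Longrightarrow> a i * of_nat (n - i) = of_nat (n choose Suc i)"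
  shows "kappa (Suc n) u (v + w)
           \<sim> kappa (Suc n) u v + kappa (Suc n) u w
             + (\<Sum>i<n. a i * comm u (v ^ Suc i * w ^ (n - i) * u ^ n))"
proof -
  define M where "M c i j = c * v ^ i * w ^ j * u ^ n" for c i j
  have kappa_v: "kappa (Suc n) u v \<sim> M (comm u v) n 0"
    using comm_mult_comm_mem[of u v v]
    by (simp add: kappa_def M_def annih_commute annih_comm_powers central_comm)
  have kappa_w: "kappa (Suc n) u w \<sim> M (comm u w) 0 n"
    using comm_mult_comm_mem[of u w w]
    by (simp add: kappa_def M_def annih_commute annih_comm_powers central_comm)
  have summand: "a i * comm u (v ^ Suc i * w ^ (n - i) * u ^ n)
      \<sim> of_nat (n choose i) * M (comm u v) i (n - i)
        + of_nat (n choose Suc i) * M (comm u w) (Suc i) (n - Suc i)" if "i < n" for i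
  proof -
    have n_i: "n - i = Suc (n - Suc i)"
      using that by simp
    have "a i * comm u (v ^ Suc i * w ^ (n - i) * u ^ n)
        \<sim> a i * (of_nat (Suc i) * M (comm u v) i (n - i)
                 + of_nat (n - i) * M (comm u w) (Suc i) (n - Suc i))"
      using equiv_mult_left[OF comm_monomial_equiv[of u v i w "n - Suc i" n]]
      by (simp only: M_def n_i)
    also have "\<dots> = of_nat (n choose i) * M (comm u v) i (n - i)
                   + of_nat (n choose Suc i) * M (comm u w) (Suc i) (n - Suc i)"
      by (simp add: distrib_left a_Suc a_diff that flip: mult.assoc del: of_nat_Suc)
    finally show ?thesis .
  qed
  have "kappa (Suc n) u (v + w)
      \<sim> (\<Sum>i\<le>n. of_nat (n choose i) * M (comm u v) i (n - i))
        + (\<Sum>i\<le>n. of_nat (n choose i) * M (comm u w) i (n - i))"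
    unfolding M_def by (rule kappa_add_right_binomial)
  also have "\<dots> = M (comm u v) n 0 + M (comm u w) 0 n
      + (\<Sum>i<n. of_nat (n choose i) * M (comm u v) i (n - i)
                + of_nat (n choose Suc i) * M (comm u w) (Suc i) (n - Suc i))"
  proof -
    have split_last: "(\<Sum>i\<le>n. f i) = f n + (\<Sum>i<n. f i)" for f :: "nat \<Rightarrow> 'a"
      by (simp add: add.commute flip: lessThan_Suc_atMost)
    show ?thesis
      by (simp only: split_last[of "\<lambda>i. of_nat (n choose i) * M (comm u v) i (n - i)"]
          sum.atMost_shift[of "\<lambda>i. of_nat (n choose i) * M (comm u w) i (n - i)"])
        (simp add: sum.distrib algebra_simps)
  qed
  also have "\<dots> \<sim> kappa (Suc n) u v + kappa (Suc n) u w
      + (\<Sum>i<n. a i * comm u (v ^ Suc i * w ^ (n - i) * u ^ n))"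
    using equiv_sym[OF kappa_v] equiv_sym[OF kappa_w] equiv_sym[OF summand]
    by (intro equiv_add equiv_sum) simp_all
  finally show ?thesis .
qed

end

lemma comm3_ideal_T3: "comm3_ideal (T3 :: 'k::field freealg set)"
proof -
  have gen_mem: "comm (comm (gen 1) (gen 2)) (gen 3) \<in> (T3 :: 'k freealg set)"
    unfolding T3_def by blast
  show ?thesis
    using T_ideal_T3 comm_comm_mem_T_ideal[OF T_ideal_T3 gen_mem]
    by unfold_locales (auto simp: T_ideal_def two_sided_ideal_def)
qed

lemma inverse_Suc_mult_binomial:
  fixes n i :: nat
  assumes "of_nat (Suc i) \<noteq> (0 :: 'a::field)"
  shows "inverse (of_nat (i + 1)) * of_nat (n choose i) * of_nat (Suc i) = (of_nat (n choose i) :: 'a)"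
    and "inverse (of_nat (i + 1)) * of_nat (n choose i) * of_nat (n - i) = (of_nat (n choose Suc i) :: 'a)"
proof -
  have "(n - i) * (n choose i) = Suc i * (n choose Suc i)"
    by (simp only: binomial_absorb_comp binomial_absorption)
  then have "of_nat (n choose i) * of_nat (n - i) = (of_nat (Suc i) * of_nat (n choose Suc i) :: 'a)"
    by (metis mult.commute of_nat_mult)
  with assms show "inverse (of_nat (i + 1)) * of_nat (n choose i) * of_nat (Suc i) = (of_nat (n choose i) :: 'a)"
    and "inverse (of_nat (i + 1)) * of_nat (n choose i) * of_nat (n - i) = (of_nat (n choose Suc i) :: 'a)"
    by (simp_all add: field_simps del: of_nat_Suc)
qed

theorem lemma2p4:
  fixes p :: nat and u v w :: "'k::field freealg"
  assumes "prime p" and "CHAR('k) = p" and "p > 2"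
  shows "kappa p u (v + w)
         - (kappa p u v + kappa p u w
            + (\<Sum>i = 0..p - 2. sc (inverse (of_nat (i + 1)) * of_nat (p - 1 choose i))
                 * comm u (v ^ (i + 1) * w ^ (p - (i + 1)) * u ^ (p - 1))))
         \<in> T3"
proof -
  obtain n where p: "p = Suc n" and "n \<noteq> 0"
    using assms(3) by (cases p) auto
  define a where "a i = sc (inverse (of_nat (i + 1)) * of_nat (n choose i) :: 'k)" for i
  have unit: "of_nat (Suc i) \<noteq> (0 :: 'k)" if "i < n" for i
    using that assms(2) p by (auto simp: of_nat_eq_0_iff_char_dvd simp del: of_nat_Suc dest: dvd_imp_le)
  have sc_coeff: "sc x * of_nat k = of_nat m" if "x * of_nat k = of_nat m" for x :: 'k and k m
    by (metis sc_mult sc_of_nat that)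
  have "comm3_ideal.equiv_mod T3 (kappa (Suc n) u (v + w))
          (kappa (Suc n) u v + kappa (Suc n) u w
           + (\<Sum>i<n. a i * comm u (v ^ Suc i * w ^ (n - i) * u ^ n)))"
    unfolding a_def
    by (intro comm3_ideal.kappa_add_right_equiv comm3_ideal_T3 sc_coeff inverse_Suc_mult_binomial unit)
  moreover have "{0..p - 2} = {..<n}"
    using p \<open>n \<noteq> 0\<close> by auto
  ultimately show ?thesis
    by (simp add: comm3_ideal.equiv_mod_def[OF comm3_ideal_T3] p a_def)
qed

end
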